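(* Let $P=\{x\in\mathbb{R}^n: Ax\ge b\}$ be full-dimensional and pointed, $c\in\mathbb{R}^n$, and $\bar x$ a basic optimal solution of $\min\{c^\top x:x\in P\}$. Let $\mathcal{T}$ be finite and $P^t=\{x\in P:D^tx\ge D^t_0\}$, $t\in\mathcal{T}$. For each $t$, let $p^t$ be a basic optimal solution of $\min\{c^\top x:x\in P^t\}$ and $C^t$ the basis cone at $p^t$ with extreme rays $r^{t1},\dots,r^{tn}$. Let $p^*\in\arg\min\{c^\top p^t: t\in\mathcal{T}\}$. If $\tilde c^\top\tilde p^*>0$, then PRLP$^0$ is feasible.
   Context: A cobasis of a basic solution is a set of $n$ linearly independent defining inequalities tight at it; the basis cone $C^t$ is the intersection of the $n$ cobasic half-spaces at $p^t$. Nonbasic space: fix a cobasis $\{a_i^\top x\ge b_i: i\in N\}$ ($|N|=n$) of $\bar x$ in $P$; for a point $x$ let $\tilde x=(a_i^\top x-b_i)_{i\in N}$ and for a ray $r$ let $\tilde r=(a_i^\top r)_{i\in N}$ (so $\bar x\mapsto 0$), and let $\tilde c\in\mathbb{R}^n$ be the vector with $c^\top x=c^\top\bar x+\tilde c^\top\tilde x$ for all $x\in\mathbb{R}^n$. PRLP$^0$ is the system in $\tilde\alpha\in\mathbb{R}^n$: $\tilde\alpha^\top\tilde p^t\ge1$ for all $t\in\mathcal{T}$ and $\tilde\alpha^\top\tilde r^{tj}\ge0$ for all $t\in\mathcal{T}$, $j\in[n]$.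
   Formalization: Each basis cone $C^t$ is taken at an optimal (dual feasible) cobasis, so $p^t$ also minimizes $c^\top x$ over $C^t$ for every $t\in\mathcal{T}$. The statement above fails without it. *)

theory Defs
  imports "HOL-Analysis.Analysis"
begin

definition polyhedron :: "((real^'n) \<times> real) set \<Rightarrow> (real^'n) set" where
  "polyhedron S = {x. \<forall>(a, \<beta>) \<in> S. a \<bullet> x \<ge> \<beta>}"

definition row_constraints :: "real^'n^'m \<Rightarrow> real^'m \<Rightarrow> ((real^'n) \<times> real) set" where
  "row_constraints A b = {(A $ i, b $ i) | i. True}"

definition pointed :: "(real^'n) set \<Rightarrow> bool" where
  "pointed P \<longleftrightarrow> (\<forall>x d. (\<forall>s::real. x + s *\<^sub>R d \<in> P) \<longrightarrow> d = 0)"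

definition is_optimal :: "real^'n \<Rightarrow> (real^'n) set \<Rightarrow> real^'n \<Rightarrow> bool" where
  "is_optimal c P x \<longleftrightarrow> x \<in> P \<and> (\<forall>y\<in>P. c \<bullet> x \<le> c \<bullet> y)"

definition is_cobasis :: "((real^'n) \<times> real) set \<Rightarrow> real^'n \<Rightarrow> ((real^'n) \<times> real) set \<Rightarrow> bool" where
  "is_cobasis S x N \<longleftrightarrow> N \<subseteq> S \<and> card N = CARD('n) \<and> inj_on fst N \<and>
     independent (fst ` N) \<and> (\<forall>(a, \<beta>) \<in> N. a \<bullet> x = \<beta>)"

definition basic_solution :: "((real^'n) \<times> real) set \<Rightarrow> real^'n \<Rightarrow> bool" where
  "basic_solution S x \<longleftrightarrow> x \<in> polyhedron S \<and> (\<exists>N. is_cobasis S x N)"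

definition basic_optimal :: "real^'n \<Rightarrow> ((real^'n) \<times> real) set \<Rightarrow> real^'n \<Rightarrow> bool" where
  "basic_optimal c S x \<longleftrightarrow> basic_solution S x \<and> is_optimal c (polyhedron S) x"

definition extreme_ray :: "(real^'n) set \<Rightarrow> real^'n \<Rightarrow> real^'n \<Rightarrow> bool" where
  "extreme_ray C p r \<longleftrightarrow> r \<noteq> 0 \<and> ((\<lambda>s. p + s *\<^sub>R r) ` {0..}) face_of C"

text \<open>Nonbasic-space coordinates w.r.t. a cobasis enumerated by nb.\<close>
definition nb_point :: "('n \<Rightarrow> (real^'n) \<times> real) \<Rightarrow> real^'n \<Rightarrow> real^'n" where
  "nb_point nb x = (\<chi> i. fst (nb i) \<bullet> x - snd (nb i))"

definition nb_ray :: "('n \<Rightarrow> (real^'n) \<times> real) \<Rightarrow> real^'n \<Rightarrow> real^'n" where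
  "nb_ray nb r = (\<chi> i. fst (nb i) \<bullet> r)"

definition PRLP0_feasible :: "('n \<Rightarrow> (real^'n) \<times> real) \<Rightarrow> 't set \<Rightarrow> ('t \<Rightarrow> real^'n)
    \<Rightarrow> ('t \<Rightarrow> 'n \<Rightarrow> real^'n) \<Rightarrow> bool" where
  "PRLP0_feasible nb T p r \<longleftrightarrow> (\<exists>\<alpha>::real^'n.
     (\<forall>t\<in>T. \<alpha> \<bullet> nb_point nb (p t) \<ge> 1) \<and> (\<forall>t\<in>T. \<forall>j. \<alpha> \<bullet> nb_ray nb (r t j) \<ge> 0))"

end

theory Submission
  imports Defs
begin

text \<open>The objective itself, read in nonbasic space and scaled by 1 / (c~ \<bullet> p~*), is a
  solution of PRLP^0: by minimality of p* it is at least 1 at every p^t, and it is nonnegative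
  on every extreme ray of C^t because p^t minimises c over C^t. Only these two facts and the
  affinity of the nonbasic coordinates are needed.\<close>

lemma nb_point_add: "nb_point nb (x + v) = nb_point nb x + nb_ray nb v"
  by (simp add: nb_point_def nb_ray_def vec_eq_iff inner_add_right)

lemma nb_objective_ray:
  assumes "\<forall>x. c \<bullet> x = c0 + ct \<bullet> nb_point nb x"
  shows "ct \<bullet> nb_ray nb v = c \<bullet> v"
proof -
  have "c \<bullet> v = c0 + ct \<bullet> nb_point nb 0 + ct \<bullet> nb_ray nb v"
    using assms nb_point_add[of nb 0 v] by (metis add_0 inner_add_right add.assoc)
  moreover have "c0 + ct \<bullet> nb_point nb 0 = 0"
    using assms by (metis inner_zero_right)
  ultimately show ?thesis by simp
qed

lemma extreme_ray_imp_mem: "extreme_ray C p r \<Longrightarrow> s \<ge> 0 \<Longrightarrow> p + s *\<^sub>R r \<in> C"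
  unfolding extreme_ray_def using face_of_imp_subset by fastforce

lemma is_optimal_extreme_ray_nonneg:
  assumes "is_optimal c C p" and "extreme_ray C p r"
  shows "0 \<le> c \<bullet> r"
proof -
  have "p + 1 *\<^sub>R r \<in> C" using extreme_ray_imp_mem[OF assms(2), of 1] by simp
  then have "c \<bullet> p \<le> c \<bullet> (p + r)" using assms(1) unfolding is_optimal_def by simp
  then show ?thesis by (simp add: inner_add_right)
qed

lemma PRLP0_feasible_scaleR:
  assumes "q > 0"
    and "\<forall>t\<in>T. q \<le> \<beta> \<bullet> nb_point nb (p t)"
    and "\<forall>t\<in>T. \<forall>j. 0 \<le> \<beta> \<bullet> nb_ray nb (r t j)"
  shows "PRLP0_feasible nb T p r"
  unfolding PRLP0_feasible_def
proof (intro exI[of _ "(1 / q) *\<^sub>R \<beta>"] conjI ballI allI)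
  fix t assume "t \<in> T"
  then show "1 \<le> (1 / q) *\<^sub>R \<beta> \<bullet> nb_point nb (p t)"
    using assms(1,2) by (simp add: field_simps)
next
  fix t j assume "t \<in> T"
  then show "0 \<le> (1 / q) *\<^sub>R \<beta> \<bullet> nb_ray nb (r t j)"
    using assms(1,3) by simp
qed

theorem proposition2:
  fixes A :: "real^'n^'m" and b :: "real^'m" and c xbar ct pstar :: "real^'n"
    and nb :: "'n \<Rightarrow> (real^'n) \<times> real"
    and T :: "'t set" and D :: "'t \<Rightarrow> ((real^'n) \<times> real) set"
    and p :: "'t \<Rightarrow> real^'n" and N :: "'t \<Rightarrow> ((real^'n) \<times> real) set"
    and r :: "'t \<Rightarrow> 'n \<Rightarrow> real^'n"
  assumes full_dim: "interior (polyhedron (row_constraints A b)) \<noteq> {}"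
    and pointed: "pointed (polyhedron (row_constraints A b))"
    and xbar: "basic_optimal c (row_constraints A b) xbar"
    and nb_inj: "inj nb"
    and nb_cob: "is_cobasis (row_constraints A b) xbar (range nb)"
    and ct: "\<forall>x. c \<bullet> x = c \<bullet> xbar + ct \<bullet> nb_point nb x"
    and finT: "finite T"
    and finD: "\<forall>t\<in>T. finite (D t)"
    and pt: "\<forall>t\<in>T. basic_optimal c (row_constraints A b \<union> D t) (p t)"
    and Nt: "\<forall>t\<in>T. is_cobasis (row_constraints A b \<union> D t) (p t) (N t)"
    and Nt_opt: "\<forall>t\<in>T. is_optimal c (polyhedron (N t)) (p t)"
    and rays: "\<forall>t\<in>T. \<forall>j. extreme_ray (polyhedron (N t)) (p t) (r t j)"
    and rays_all: "\<forall>t\<in>T. \<forall>v. extreme_ray (polyhedron (N t)) (p t) v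
                      \<longrightarrow> (\<exists>j. \<exists>s>0. v = s *\<^sub>R r t j)"
    and rays_distinct: "\<forall>t\<in>T. \<forall>j k. j \<noteq> k \<longrightarrow> \<not> (\<exists>s>0. r t k = s *\<^sub>R r t j)"
    and pstar: "\<exists>t\<in>T. pstar = p t"
    and pstar_min: "\<forall>t\<in>T. c \<bullet> pstar \<le> c \<bullet> p t"
    and pos: "ct \<bullet> nb_point nb pstar > 0"
  shows "PRLP0_feasible nb T p r"
proof (rule PRLP0_feasible_scaleR[OF pos])
  show "\<forall>t\<in>T. ct \<bullet> nb_point nb pstar \<le> ct \<bullet> nb_point nb (p t)"
    using pstar_min ct by (metis add_le_cancel_left)
  show "\<forall>t\<in>T. \<forall>j. 0 \<le> ct \<bullet> nb_ray nb (r t j)"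
    using is_optimal_extreme_ray_nonneg Nt_opt rays nb_objective_ray[OF ct] by metis
qed

end
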